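(* For the operator $A\colon c_c\to c_c$, $(Ax)_1=x_1$, $(Ax)_n=x_n-x_{n-1}$ ($n>1$), the point $x=0$ minimizes $f\circ A$ over $c_c$, and $\min_{x\in c_c} f(Ax)=f(0)=\pi^2/12$. Moreover, the directional derivative of $f\circ A$ at $0$ vanishes in every direction $y\in c_c$.
   Context: Let $c_c$ be the space of finitely supported real sequences with the $\ell^2$-norm. Let $f\colon c_c\to\mathbb{R}$, $f(x)=\sum_{n=1}^\infty \frac{n^2}{2}(x_n-n^{-2})^2$. *)

theory Defs
  imports "HOL-Analysis.Analysis"
begin

text \<open>Sequences are 0-indexed: the paper's coordinate x_n (n \<ge> 1) is x (n - 1) here.\<close>

definition cc :: "(nat \<Rightarrow> real) set" where
  "cc = {x. finite {n. x n \<noteq> 0}}"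

definition f :: "(nat \<Rightarrow> real) \<Rightarrow> real" where
  "f x = (\<Sum>k. (real (k+1))^2 / 2 * (x k - 1 / (real (k+1))^2)^2)"

definition opA :: "(nat \<Rightarrow> real) \<Rightarrow> (nat \<Rightarrow> real)" where
  "opA x = (\<lambda>k. if k = 0 then x 0 else x k - x (k - 1))"

end

theory Submission
  imports Defs
begin

text \<open>Expanding the square, each summand of \<open>f z\<close> is \<open>(k+1)\<^sup>2/2 \<cdot> z\<^sub>k\<^sup>2 - z\<^sub>k\<close> plus the
  corresponding summand of \<open>f 0 = \<pi>\<^sup>2/12\<close>. For \<open>z = A x\<close> with \<open>x\<close> finitely supported the
  linear part \<open>\<Sum>k. (A x)\<^sub>k\<close> telescopes to \<open>0\<close>, so \<open>f (A x) - f 0\<close> is a nonnegative quadratic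
  form in \<open>x\<close>: it is minimal at \<open>x = 0\<close> and its difference quotients in every direction are
  \<open>O(t)\<close>.\<close>

lemma square_shift_expand:
  fixes a z :: real
  assumes "a \<noteq> 0"
  shows "a\<^sup>2 / 2 * (z - 1 / a\<^sup>2)\<^sup>2 = a\<^sup>2 / 2 * z\<^sup>2 - z + 1 / (2 * a\<^sup>2)"
  using assms by (simp add: power2_eq_square field_simps)

lemma f_summand_expand:
  "(real (k+1))\<^sup>2 / 2 * (z - 1 / (real (k+1))\<^sup>2)\<^sup>2
     = (real (k+1))\<^sup>2 / 2 * z\<^sup>2 - z + 1 / (2 * (real (k+1))\<^sup>2)"
  by (rule square_shift_expand) simp

lemma f_summand_zero_sums:
  "(\<lambda>k. (real (k+1))\<^sup>2 / 2 * (0 - 1 / (real (k+1))\<^sup>2)\<^sup>2) sums (pi\<^sup>2 / 12)"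
proof -
  have "(\<lambda>k. (real (k+1))\<^sup>2 / 2 * (0 - 1 / (real (k+1))\<^sup>2)\<^sup>2) = (\<lambda>k. 1/2 * (1 / real ((k + 1)\<^sup>2)))"
    unfolding f_summand_expand of_nat_power by simp
  then show ?thesis
    using sums_mult[OF inverse_squares_sums, of "1/2"] by simp
qed

lemma f_zero: "f (\<lambda>_. 0) = pi\<^sup>2 / 12"
  unfolding f_def using f_summand_zero_sums by (simp add: sums_iff)

lemma f_eq_of_vanishing_beyond:
  assumes "\<forall>k\<ge>N. z k = 0"
  shows "f z = pi\<^sup>2 / 12 + (\<Sum>k<N. (real (k+1))\<^sup>2 / 2 * (z k)\<^sup>2 - z k)"
proof -
  let ?g = "\<lambda>z k. (real (k+1))\<^sup>2 / 2 * (z k - 1 / (real (k+1))\<^sup>2)\<^sup>2"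
  have diff: "?g z k - ?g (\<lambda>_. 0) k = (real (k+1))\<^sup>2 / 2 * (z k)\<^sup>2 - z k" for k
    unfolding f_summand_expand by simp
  have "(\<lambda>k. ?g z k - ?g (\<lambda>_. 0) k) sums (\<Sum>k<N. (real (k+1))\<^sup>2 / 2 * (z k)\<^sup>2 - z k)"
    unfolding diff by (rule sums_finite) (use assms in auto)
  from sums_add[OF this f_summand_zero_sums]
  have "?g z sums ((\<Sum>k<N. (real (k+1))\<^sup>2 / 2 * (z k)\<^sup>2 - z k) + pi\<^sup>2 / 12)"
    by simp
  then show ?thesis
    unfolding f_def by (simp add: sums_iff)
qed

lemma cc_vanishing_beyond:
  assumes "x \<in> cc"
  shows "\<exists>N. \<forall>k\<ge>N. x k = 0"
proof -
  from assms obtain N where "{n. x n \<noteq> 0} \<subseteq> {..<N}"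
    unfolding cc_def using finite_nat_bounded by blast
  then show ?thesis
    by (auto simp: subset_iff not_less[symmetric])
qed

lemma opA_zero: "opA (\<lambda>_. 0) = (\<lambda>_. 0)"
  by (rule ext) (simp add: opA_def)

lemma opA_scale: "opA (\<lambda>n. t * x n) = (\<lambda>k. t * opA x k)"
  by (rule ext) (simp add: opA_def right_diff_distrib)

lemma sum_opA: "(\<Sum>k<Suc n. opA x k) = x n"
  by (induction n) (auto simp: opA_def)

lemma f_opA_eq_of_vanishing_beyond:
  assumes "\<forall>k\<ge>N. x k = 0"
  shows "f (opA x) = pi\<^sup>2 / 12 + (\<Sum>k<Suc N. (real (k+1))\<^sup>2 / 2 * (opA x k)\<^sup>2)"
proof -
  have "\<forall>k\<ge>Suc N. opA x k = 0"
    using assms by (auto simp: opA_def)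
  then have "f (opA x) = pi\<^sup>2 / 12 + (\<Sum>k<Suc N. (real (k+1))\<^sup>2 / 2 * (opA x k)\<^sup>2 - opA x k)"
    by (rule f_eq_of_vanishing_beyond)
  also have "\<dots> = pi\<^sup>2 / 12 + (\<Sum>k<Suc N. (real (k+1))\<^sup>2 / 2 * (opA x k)\<^sup>2) - (\<Sum>k<Suc N. opA x k)"
    by (simp add: sum_subtractf)
  also have "(\<Sum>k<Suc N. opA x k) = 0"
    using sum_opA assms by simp
  finally show ?thesis by simp
qed

lemma f_opA_ge_f_zero:
  assumes "x \<in> cc"
  shows "f (\<lambda>_. 0) \<le> f (opA x)"
proof -
  obtain N where "\<forall>k\<ge>N. x k = 0"
    using assms cc_vanishing_beyond by blast
  from f_opA_eq_of_vanishing_beyond[OF this] show ?thesis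
    by (simp add: f_zero sum_nonneg)
qed

lemma f_opA_scale_quadratic:
  assumes "y \<in> cc"
  obtains C where "\<And>t. f (opA (\<lambda>n. t * y n)) = f (\<lambda>_. 0) + t\<^sup>2 * C"
proof -
  obtain N where N: "\<forall>k\<ge>N. y k = 0"
    using assms cc_vanishing_beyond by blast
  define C where "C = (\<Sum>k<Suc N. (real (k+1))\<^sup>2 / 2 * (opA y k)\<^sup>2)"
  have "f (opA (\<lambda>n. t * y n)) = f (\<lambda>_. 0) + t\<^sup>2 * C" for t
  proof -
    have "f (opA (\<lambda>n. t * y n)) = pi\<^sup>2 / 12 + (\<Sum>k<Suc N. (real (k+1))\<^sup>2 / 2 * (t * opA y k)\<^sup>2)"
      using f_opA_eq_of_vanishing_beyond[of N "\<lambda>n. t * y n"] N by (simp add: opA_scale)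
    also have "(\<Sum>k<Suc N. (real (k+1))\<^sup>2 / 2 * (t * opA y k)\<^sup>2) = t\<^sup>2 * C"
      unfolding C_def sum_distrib_left by (rule sum.cong) (simp_all add: power_mult_distrib)
    finally show ?thesis by (simp add: f_zero)
  qed
  then show ?thesis by (rule that)
qed

lemma f_opA_directional_derivative_zero:
  assumes "y \<in> cc"
  shows "((\<lambda>t. (f (opA (\<lambda>n. t * y n)) - f (opA (\<lambda>_. 0))) / t) \<longlongrightarrow> 0) (at_right 0)"
proof -
  obtain C where C: "\<And>t. f (opA (\<lambda>n. t * y n)) = f (\<lambda>_. 0) + t\<^sup>2 * C"
    using f_opA_scale_quadratic[OF assms] by blast
  have "((\<lambda>t. t * C) \<longlongrightarrow> 0) (at_right 0)"
    by (intro tendsto_mult_left_zero tendsto_ident_at)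
  moreover have "\<forall>\<^sub>F t in at_right 0. t * C = (f (opA (\<lambda>n. t * y n)) - f (opA (\<lambda>_. 0))) / t"
    using eventually_at_right_less[of "0::real"]
    by eventually_elim (simp add: C opA_zero power2_eq_square)
  ultimately show ?thesis
    by (rule Lim_transform_eventually)
qed

theorem mainTheorem10:
  shows "(\<forall>x\<in>cc. f (opA (\<lambda>_. 0)) \<le> f (opA x))
       \<and> (INF x\<in>cc. f (opA x)) = f (\<lambda>_. 0)
       \<and> f (opA (\<lambda>_. 0)) = f (\<lambda>_. 0)
       \<and> f (\<lambda>_. 0) = pi^2 / 12
       \<and> (\<forall>y\<in>cc. ((\<lambda>t. (f (opA (\<lambda>n. t * y n)) - f (opA (\<lambda>_. 0))) / t) \<longlongrightarrow> 0) (at_right 0))"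
proof -
  have zero_in_cc: "(\<lambda>_. 0) \<in> cc"
    by (simp add: cc_def)
  have "(INF x\<in>cc. f (opA x)) = f (\<lambda>_. 0)"
  proof (rule cInf_eq_minimum)
    show "f (\<lambda>_. 0) \<in> (\<lambda>x. f (opA x)) ` cc"
      using zero_in_cc by (rule rev_image_eqI) (simp add: opA_zero)
  qed (auto intro: f_opA_ge_f_zero)
  then show ?thesis
    using f_opA_ge_f_zero f_zero f_opA_directional_derivative_zero[unfolded opA_zero]
    unfolding opA_zero by blast
qed

end
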